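(* Let $\mathscr{A}$ be a unital $C^*$-algebra with identity $I$, $\mathscr H$ a Hilbert space, and $\Phi:\mathscr{A}\to\mathbb{B}(\mathscr{H})$ a unital completely positive linear map. If $A,B\in\mathscr{A}$ belong to the balls of diameter $[m_1I,M_1I]$ and $[m_2I,M_2I]$ respectively, for some $m_1,M_1,m_2,M_2\in\mathbb C$, then $$\left|\Phi(AB)-\Phi(A)\Phi(B)\right|\le\tfrac14|M_1-m_1|\,|M_2-m_2|\,I .$$
   Context: For an operator $X$, $|X|=(X^*X)^{1/2}$. In a normed space the ball of diameter $[x,y]$ is $\{z:\|z-(x+y)/2\|\le\|(x-y)/2\|\}$; thus $A$ lies in the ball of diameter $[mI,MI]$ iff $\|A-\frac{M+m}{2}I\|\le\frac{|M-m|}{2}$. *)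

theory Defs
  imports "HOL-Analysis.Analysis"
begin

class cvector = real_vector +
  fixes scaleC :: "complex \<Rightarrow> 'a \<Rightarrow> 'a"
  assumes scaleC_add_right: "scaleC a (x + y) = scaleC a x + scaleC a y"
    and scaleC_add_left: "scaleC (a + b) x = scaleC a x + scaleC b x"
    and scaleC_scaleC: "scaleC a (scaleC b x) = scaleC (a * b) x"
    and scaleC_one: "scaleC 1 x = x"
    and scaleR_scaleC: "scaleR r x = scaleC (complex_of_real r) x"

class cnormed_vector = cvector + real_normed_vector +
  assumes norm_scaleC: "norm (scaleC a x) = cmod a * norm x"

class cnormed_algebra_1 = cnormed_vector + real_normed_algebra_1 +
  assumes scaleC_mult_left: "scaleC a (x * y) = scaleC a x * y"
    and scaleC_mult_right: "scaleC a (x * y) = x * scaleC a y"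

class unital_cstar_algebra = cnormed_algebra_1 + banach +
  fixes cstar :: "'a \<Rightarrow> 'a"
  assumes cstar_cstar: "cstar (cstar x) = x"
    and cstar_add: "cstar (x + y) = cstar x + cstar y"
    and cstar_scaleC: "cstar (scaleC a x) = scaleC (cnj a) (cstar x)"
    and cstar_mult: "cstar (x * y) = cstar y * cstar x"
    and cstar_identity: "norm (cstar x * x) = (norm x)\<^sup>2"

definition pos_matrix :: "nat \<Rightarrow> (nat \<Rightarrow> nat \<Rightarrow> 'a::unital_cstar_algebra) \<Rightarrow> bool" where
  "pos_matrix n a \<longleftrightarrow> (\<exists>X :: nat \<Rightarrow> nat \<Rightarrow> 'a.
      \<forall>i<n. \<forall>j<n. a i j = (\<Sum>k<n. cstar (X k i) * X k j))"

text \<open>Inner product linear in the second argument, conjugate linear in the first.\<close>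
class chilbert_space = cnormed_vector + banach +
  fixes cinner :: "'a \<Rightarrow> 'a \<Rightarrow> complex"
  assumes cinner_cnj: "cnj (cinner x y) = cinner y x"
    and cinner_add_right: "cinner x (y + z) = cinner x y + cinner x z"
    and cinner_scaleC_right: "cinner x (scaleC a y) = a * cinner x y"
    and cinner_self_nonneg: "0 \<le> Re (cinner x x)"
    and cinner_self_zero: "cinner x x = 0 \<Longrightarrow> x = 0"
    and norm_cinner: "norm x = sqrt (Re (cinner x x))"

definition bounded_op :: "('h::chilbert_space \<Rightarrow> 'h) \<Rightarrow> bool" where
  "bounded_op T \<longleftrightarrow> (\<forall>x y. T (x + y) = T x + T y) \<and> (\<forall>a x. T (scaleC a x) = scaleC a (T x))
      \<and> (\<exists>K. \<forall>x. norm (T x) \<le> K * norm x)"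

definition op_adjoint :: "('h::chilbert_space \<Rightarrow> 'h) \<Rightarrow> ('h \<Rightarrow> 'h)" where
  "op_adjoint T = (THE S. \<forall>x y. cinner (T x) y = cinner x (S y))"

definition positive_op :: "('h::chilbert_space \<Rightarrow> 'h) \<Rightarrow> bool" where
  "positive_op T \<longleftrightarrow> (\<forall>x. cinner x (T x) \<in> \<real> \<and> 0 \<le> Re (cinner x (T x)))"

definition op_le :: "('h::chilbert_space \<Rightarrow> 'h) \<Rightarrow> ('h \<Rightarrow> 'h) \<Rightarrow> bool" where
  "op_le S T \<longleftrightarrow> positive_op (\<lambda>x. T x - S x)"

definition op_sqrt :: "('h::chilbert_space \<Rightarrow> 'h) \<Rightarrow> ('h \<Rightarrow> 'h)" where
  "op_sqrt P = (THE Q. bounded_op Q \<and> positive_op Q \<and> Q \<circ> Q = P)"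

definition op_abs :: "('h::chilbert_space \<Rightarrow> 'h) \<Rightarrow> ('h \<Rightarrow> 'h)" where
  "op_abs T = op_sqrt (op_adjoint T \<circ> T)"

definition ucp_map :: "('a::unital_cstar_algebra \<Rightarrow> ('h::chilbert_space \<Rightarrow> 'h)) \<Rightarrow> bool" where
  "ucp_map \<Phi> \<longleftrightarrow>
     (\<forall>a. bounded_op (\<Phi> a))
   \<and> (\<forall>a b. \<Phi> (a + b) = (\<lambda>x. \<Phi> a x + \<Phi> b x))
   \<and> (\<forall>c a. \<Phi> (scaleC c a) = (\<lambda>x. scaleC c (\<Phi> a x)))
   \<and> \<Phi> 1 = id
   \<and> (\<forall>n a. pos_matrix n a \<longrightarrow>
        (\<forall>v :: nat \<Rightarrow> 'h. (\<Sum>i<n. \<Sum>j<n. cinner (v i) (\<Phi> (a i j) (v j))) \<in> \<real>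
            \<and> 0 \<le> Re (\<Sum>i<n. \<Sum>j<n. cinner (v i) (\<Phi> (a i j) (v j)))))"

definition in_diam_ball :: "complex \<Rightarrow> complex \<Rightarrow> 'a::unital_cstar_algebra \<Rightarrow> bool" where
  "in_diam_ball m M A \<longleftrightarrow> norm (A - scaleC ((M + m) / 2) 1) \<le> cmod (M - m) / 2"

end

theory Submission
  imports Defs
begin

text \<open>
  Write \<open>C = A - ((M1+m1)/2) 1\<close> and \<open>D = B - ((M2+m2)/2) 1\<close>, so that
  \<open>\<parallel>C\<parallel> \<le> |M1-m1|/2\<close> and \<open>\<parallel>D\<parallel> \<le> |M2-m2|/2\<close>.  Since \<open>\<Phi>\<close> is unital and linear, the
  defect \<open>T = \<Phi>(AB) - \<Phi>(A)\<Phi>(B)\<close> does not change when \<open>A, B\<close> are replaced by \<open>C, D\<close>.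
  Positivity of \<open>\<Phi>\<close> on the 3x3 Gram matrix of \<open>1, C*, D\<close> yields a Schwarz-type inequality
  which, combined with \<open>\<Phi>(c*c) \<le> \<parallel>c\<parallel>\<^sup>2\<close> and a discriminant argument, gives the operator-norm
  bound \<open>\<parallel>T x\<parallel> \<le> \<parallel>C\<parallel> \<parallel>D\<parallel> \<parallel>x\<parallel>\<close>.  Finally \<open>\<parallel>T\<parallel> \<le> c\<close> implies \<open>|T| \<le> c I\<close>.
\<close>

lemma scaleC_zero_left [simp]: "scaleC 0 (x::'a::cvector) = 0"
proof -
  have "scaleC 0 x + scaleC 0 x = scaleC 0 x"
    using scaleC_add_left[of 0 0 x, symmetric] by (simp only: add_0_left)
  thus ?thesis by simp
qed

lemma scaleC_zero_right [simp]: "scaleC a (0::'a::cvector) = 0"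
proof -
  have "scaleC a (0::'a) + scaleC a 0 = scaleC a 0"
    using scaleC_add_right[of a 0 0, symmetric] by (simp only: add_0_left)
  thus ?thesis by simp
qed

lemma scaleC_minus_right: "scaleC a (- x::'a::cvector) = - scaleC a x"
proof -
  have "scaleC a x + scaleC a (-x) = scaleC a (x + -x)" by (rule scaleC_add_right[symmetric])
  also have "\<dots> = 0" by simp
  finally show ?thesis by (simp only: add_eq_0_iff)
qed

lemma scaleC_diff_right: "scaleC a (x - y::'a::cvector) = scaleC a x - scaleC a y"
  by (simp only: diff_conv_add_uminus scaleC_add_right scaleC_minus_right)

lemma scaleC_minus_one: "scaleC (-1) (x::'a::cvector) = - x"
proof -
  have "x + scaleC (-1) x = scaleC (1 + -1) x" by (simp only: scaleC_add_left scaleC_one)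
  also have "\<dots> = 0" by simp
  finally show ?thesis by (simp only: add_eq_0_iff)
qed

lemma scaleC_scaleR_commute: "scaleC a (scaleR r (x::'a::cvector)) = scaleR r (scaleC a x)"
  by (simp add: scaleR_scaleC scaleC_scaleC mult.commute)

lemma bounded_linear_scaleC: "bounded_linear (scaleC a :: 'a::cnormed_vector \<Rightarrow> 'a)"
  by (rule bounded_linear_intro[of _ "cmod a"])
     (auto simp: scaleC_add_right scaleC_scaleR_commute norm_scaleC mult.commute)

lemma cinner_add_left: "cinner (x + y) (z::'a::chilbert_space) = cinner x z + cinner y z"
  by (metis cinner_add_right cinner_cnj complex_cnj_add)

lemma cinner_scaleC_left: "cinner (scaleC a x) (z::'a::chilbert_space) = cnj a * cinner x z"
  by (metis cinner_cnj cinner_scaleC_right complex_cnj_mult)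

lemma cinner_zero_right [simp]: "cinner x (0::'a::chilbert_space) = 0"
  using cinner_scaleC_right[of x 0 "0::'a"] by simp

lemma cinner_zero_left [simp]: "cinner (0::'a::chilbert_space) x = 0"
  by (metis cinner_cnj cinner_zero_right complex_cnj_zero)

lemma cinner_minus_right: "cinner x (- y::'a::chilbert_space) = - cinner x y"
  by (metis add_eq_0_iff cinner_add_right cinner_zero_right add.right_inverse)

lemma cinner_minus_left: "cinner (- x) (y::'a::chilbert_space) = - cinner x y"
  by (metis add_eq_0_iff cinner_add_left cinner_zero_left add.right_inverse)

lemma cinner_diff_right: "cinner x (y - z::'a::chilbert_space) = cinner x y - cinner x z"
  by (simp only: diff_conv_add_uminus cinner_add_right cinner_minus_right)

lemma cinner_diff_left: "cinner (x - y) (z::'a::chilbert_space) = cinner x z - cinner y z"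
  by (simp only: diff_conv_add_uminus cinner_add_left cinner_minus_left)

lemma cinner_scaleR_right: "cinner x (scaleR r y::'a::chilbert_space) = of_real r * cinner x y"
  by (simp add: scaleR_scaleC cinner_scaleC_right)

lemma cinner_scaleR_left: "cinner (scaleR r x) (y::'a::chilbert_space) = of_real r * cinner x y"
  by (simp add: scaleR_scaleC cinner_scaleC_left)

lemma cinner_self_real: "cinner x (x::'a::chilbert_space) \<in> \<real>"
  using cinner_cnj[of x x] by (simp add: Reals_cnj_iff)

lemma cinner_self: "cinner x (x::'a::chilbert_space) = of_real ((norm x)\<^sup>2)"
proof -
  have "cinner x x = of_real (Re (cinner x x))" using cinner_self_real[of x]
    by (simp add: complex_is_Real_iff complex_eq_iff)
  thus ?thesis by (simp add: norm_cinner cinner_self_nonneg)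
qed

lemma Re_cinner_self: "Re (cinner x (x::'a::chilbert_space)) = (norm x)\<^sup>2"
  by (simp add: cinner_self)

lemma cinner_ext: "(\<And>z. cinner z x = cinner z (y::'a::chilbert_space)) \<Longrightarrow> x = y"
  by (metis cinner_diff_right cinner_self_zero eq_iff_diff_eq_0 right_minus_eq)

lemma quadratic_discriminant_le:
  fixes A b G :: real
  assumes b: "b \<ge> 0" and A: "A \<ge> 0" and G: "G \<ge> 0"
    and nonneg: "\<And>t. t \<ge> 0 \<Longrightarrow> 0 \<le> A * t\<^sup>2 - 2 * t * b + G"
  shows "b\<^sup>2 \<le> A * G"
proof (cases "b = 0")
  case True thus ?thesis using A G by simp
next
  case False
  hence bp: "b > 0" using b by simp
  show ?thesis
  proof (cases "A = 0")
    case True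
    have "0 \<le> A * ((G + 1) / (2 * b))\<^sup>2 - 2 * ((G + 1) / (2 * b)) * b + G"
      using nonneg[of "(G + 1) / (2 * b)"] bp G by simp
    thus ?thesis using True bp by simp
  next
    case False
    hence Ap: "A > 0" using A by simp
    have "0 \<le> A * (b / A)\<^sup>2 - 2 * (b / A) * b + G" using nonneg[of "b / A"] Ap b by simp
    also have "A * (b / A)\<^sup>2 - 2 * (b / A) * b + G = G - b\<^sup>2 / A"
      using Ap by (simp add: field_simps power2_eq_square)
    finally have "b\<^sup>2 / A \<le> G" by simp
    thus ?thesis using Ap by (simp add: pos_divide_le_eq mult.commute)
  qed
qed

lemma bounded_op_add: "bounded_op T \<Longrightarrow> T (x + y) = T x + T y"
  by (simp add: bounded_op_def)

lemma bounded_op_scaleC: "bounded_op T \<Longrightarrow> T (scaleC a x) = scaleC a (T x)"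
  by (simp add: bounded_op_def)

lemma bounded_op_minus: "bounded_op T \<Longrightarrow> T (- x) = - T x"
  using bounded_op_scaleC[of T "-1" x] by (simp add: scaleC_minus_one)

lemma bounded_op_diff: "bounded_op T \<Longrightarrow> T (x - y) = T x - T y"
  by (simp only: diff_conv_add_uminus bounded_op_add bounded_op_minus)

lemma bounded_op_scaleR: "bounded_op T \<Longrightarrow> T (scaleR r x) = scaleR r (T x)"
  by (simp add: scaleR_scaleC bounded_op_scaleC)

lemma bounded_op_bound:
  assumes "bounded_op T"
  obtains K where "K \<ge> 0" "\<And>x. norm (T x) \<le> K * norm x"
proof -
  obtain K where K: "\<forall>x. norm (T x) \<le> K * norm x" using assms by (auto simp: bounded_op_def)
  hence "norm (T x) \<le> max K 0 * norm x" for x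
    by (meson max.cobounded1 mult_right_mono norm_ge_zero order_trans)
  thus ?thesis using that[of "max K 0"] by simp
qed

lemma bounded_op_bounded_linear:
  assumes "bounded_op T"
  shows "bounded_linear T"
proof -
  obtain K where "\<And>x. norm (T x) \<le> K * norm x" using bounded_op_bound[OF assms] by blast
  thus ?thesis
    by (intro bounded_linear_intro[of _ K]) (auto simp: assms bounded_op_add bounded_op_scaleR mult.commute)
qed

lemma bounded_op_id: "bounded_op (id :: 'h::chilbert_space \<Rightarrow> 'h)"
  by (auto simp: bounded_op_def intro!: exI[of _ 1])

lemma bounded_op_comp:
  assumes S: "bounded_op S" and T: "bounded_op T"
  shows "bounded_op (S \<circ> T)"
proof -
  obtain C where C: "C \<ge> 0" "\<And>x. norm (S x) \<le> C * norm x" using bounded_op_bound[OF S] by blast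
  obtain D where D: "\<And>x. norm (T x) \<le> D * norm x" using bounded_op_bound[OF T] by blast
  have "norm (S (T x)) \<le> (C * D) * norm x" for x
    using order_trans[OF C(2) mult_left_mono[OF D C(1)]] by (simp add: mult.assoc)
  thus ?thesis using S T unfolding bounded_op_def by (auto simp: bounded_op_add bounded_op_scaleC)
qed

lemma bounded_op_funpow: "bounded_op T \<Longrightarrow> bounded_op (T ^^ n)"
  by (induction n) (simp_all add: bounded_op_id bounded_op_comp)

lemma bounded_op_diff_fun:
  assumes S: "bounded_op S" and T: "bounded_op T"
  shows "bounded_op (\<lambda>x. S x - T x)"
proof -
  obtain C where C: "\<And>x. norm (S x) \<le> C * norm x" using bounded_op_bound[OF S] by blast
  obtain D where D: "\<And>x. norm (T x) \<le> D * norm x" using bounded_op_bound[OF T] by blast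
  have "norm (S x - T x) \<le> (C + D) * norm x" for x
    using norm_triangle_ineq4[of "S x" "T x"] C[of x] D[of x] by (simp add: algebra_simps)
  thus ?thesis using S T unfolding bounded_op_def
    by (auto simp: bounded_op_add bounded_op_scaleC scaleC_diff_right)
qed

text \<open>Over the complex field, positivity of the quadratic form forces self-adjointness
  (polarisation with the vectors \<open>x + y\<close> and \<open>x + i y\<close>).\<close>
lemma positive_op_selfadjoint:
  assumes b: "bounded_op R" and p: "positive_op R"
  shows "cinner (R x) y = cinner x (R y)"
proof -
  let ?p = "cinner x (R y)" and ?s = "cinner y (R x)"
  have real: "\<And>z. cinner z (R z) \<in> \<real>" using p by (simp add: positive_op_def)
  have "cinner (x + y) (R (x + y)) = cinner x (R x) + cinner y (R y) + (?p + ?s)"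
    using b by (simp add: bounded_op_add cinner_add_left cinner_add_right)
  hence r1: "?p + ?s \<in> \<real>" using real[of "x + y"] real[of x] real[of y]
    by (metis Reals_add Reals_diff add_diff_cancel_left')
  have "cinner (x + scaleC \<i> y) (R (x + scaleC \<i> y))
      = cinner x (R x) + cinner y (R y) + \<i> * (?p - ?s)"
    using b by (simp add: bounded_op_add bounded_op_scaleC cinner_add_left cinner_add_right
        cinner_scaleC_left cinner_scaleC_right algebra_simps)
  hence r2: "\<i> * (?p - ?s) \<in> \<real>" using real[of "x + scaleC \<i> y"] real[of x] real[of y]
    by (metis Reals_add Reals_diff add_diff_cancel_left')
  have "?s = cnj ?p" using r1 r2 by (simp add: complex_is_Real_iff complex_eq_iff)
  moreover have "cinner (R x) y = cnj ?s" by (simp add: cinner_cnj)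
  ultimately show ?thesis by simp
qed

lemma positive_op_cauchy_schwarz:
  assumes b: "bounded_op R" and p: "positive_op R"
  shows "(cmod (cinner x (R y)))\<^sup>2 \<le> Re (cinner y (R y)) * Re (cinner x (R x))"
proof -
  define s where "s = cinner x (R y)"
  define w where "w = scaleC (if s = 0 then 1 else cnj s / of_real (cmod s)) y"
  have "cnj s * s = of_real ((cmod s)\<^sup>2)" using complex_norm_square[of s] by (simp add: mult.commute)
  hence xw: "cinner x (R w) = of_real (cmod s)"
    by (simp add: w_def bounded_op_scaleC[OF b] cinner_scaleC_right s_def[symmetric]
        power2_eq_square)
  have wx: "cinner w (R x) = of_real (cmod s)"
    using xw by (metis cinner_cnj complex_cnj_complex_of_real positive_op_selfadjoint[OF b p])
  have ww: "cinner w (R w) = cinner y (R y)"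
  proof (cases "s = 0")
    case False
    thus ?thesis using \<open>cnj s * s = of_real ((cmod s)\<^sup>2)\<close>
      by (simp add: w_def bounded_op_scaleC[OF b] cinner_scaleC_left cinner_scaleC_right
          power2_eq_square field_simps)
  qed (simp add: w_def scaleC_one)
  have "0 \<le> Re (cinner y (R y)) * t\<^sup>2 - 2 * t * cmod s + Re (cinner x (R x))" if "t \<ge> 0" for t
  proof -
    have "0 \<le> Re (cinner (x - t *\<^sub>R w) (R (x - t *\<^sub>R w)))" using p by (simp add: positive_op_def)
    also have "\<dots> = Re (cinner y (R y)) * t\<^sup>2 - 2 * t * cmod s + Re (cinner x (R x))"
      by (simp add: bounded_op_diff[OF b] bounded_op_scaleR[OF b] cinner_diff_left
          cinner_diff_right cinner_scaleR_left cinner_scaleR_right xw wx ww power2_eq_square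
          algebra_simps)
    finally show ?thesis .
  qed
  thus ?thesis unfolding s_def
    by (intro quadratic_discriminant_le) (use p in \<open>auto simp: positive_op_def\<close>)
qed

lemma positive_op_id: "positive_op (id :: 'h::chilbert_space \<Rightarrow> 'h)"
  by (simp add: positive_op_def cinner_self)

lemma cauchy_schwarz: "cmod (cinner x (y::'a::chilbert_space)) \<le> norm x * norm y"
proof -
  have "(cmod (cinner x y))\<^sup>2 \<le> (norm x * norm y)\<^sup>2"
    using positive_op_cauchy_schwarz[OF bounded_op_id positive_op_id, of x y]
    by (simp add: Re_cinner_self power_mult_distrib mult.commute)
  thus ?thesis by (rule power2_le_imp_le) simp
qed

lemma bounded_linear_cinner_right: "bounded_linear (cinner (x::'a::chilbert_space))"
  by (rule bounded_linear_intro[of _ "norm x"])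
     (auto simp: cinner_add_right cinner_scaleR_right scaleR_conv_of_real,
      metis cauchy_schwarz mult.commute)

lemma bounded_linear_cinner_left: "bounded_linear (\<lambda>v. cinner v (x::'a::chilbert_space))"
  by (rule bounded_linear_intro[of _ "norm x"])
     (auto simp: cinner_add_left cinner_scaleR_left scaleR_conv_of_real cauchy_schwarz mult.commute)

lemma positive_op_form_zero:
  assumes b: "bounded_op R" and p: "positive_op R" and z: "cinner z (R z) = 0"
  shows "R z = 0"
proof -
  have "(cmod (cinner (R z) (R z)))\<^sup>2 \<le> Re (cinner z (R z)) * Re (cinner (R z) (R (R z)))"
    using positive_op_cauchy_schwarz[OF b p, of "R z" z] by (simp add: mult.commute)
  thus ?thesis using z by (simp add: cinner_self)
qed

lemma positive_op_norm_square_bound: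
  assumes b: "bounded_op R" and p: "positive_op R"
  obtains K where "K > 0" "\<And>x. (norm (R x))\<^sup>2 \<le> K * Re (cinner x (R x))"
proof -
  obtain C where C: "C \<ge> 0" "\<And>x. norm (R x) \<le> C * norm x" using bounded_op_bound[OF b] by blast
  have "(norm (R x))\<^sup>2 \<le> (C + 1) * Re (cinner x (R x))" for x
  proof (cases "R x = 0")
    case True thus ?thesis using p C(1) by (simp add: positive_op_def)
  next
    case False
    define y where "y = R x"
    have "(norm y)\<^sup>2 = Re (cinner x (R y))"
      by (simp add: y_def Re_cinner_self[symmetric] positive_op_selfadjoint[OF b p])
    also have "\<dots> \<le> cmod (cinner x (R y))" by (rule complex_Re_le_cmod)
    finally have "((norm y)\<^sup>2)\<^sup>2 \<le> Re (cinner y (R y)) * Re (cinner x (R x))"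
      using positive_op_cauchy_schwarz[OF b p, of x y]
      by (meson order_trans power_mono zero_le_power2)
    also have "Re (cinner y (R y)) \<le> (C + 1) * (norm y)\<^sup>2"
      using complex_Re_le_cmod[of "cinner y (R y)"] cauchy_schwarz[of y "R y"] C(2)[of y]
        mult_left_mono[OF C(2)[of y] norm_ge_zero[of y]]
      by (simp add: power2_eq_square algebra_simps) (smt (verit) mult_nonneg_nonneg norm_ge_zero)
    hence "Re (cinner y (R y)) * Re (cinner x (R x))
        \<le> (C + 1) * (norm y)\<^sup>2 * Re (cinner x (R x))"
      using p by (intro mult_right_mono) (auto simp: positive_op_def)
    finally have "(norm y)\<^sup>2 * (norm y)\<^sup>2 \<le> (norm y)\<^sup>2 * ((C + 1) * Re (cinner x (R x)))"
      by (simp add: power2_eq_square algebra_simps)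
    moreover have "(norm y)\<^sup>2 > 0" using False by (simp add: y_def)
    ultimately have "(norm y)\<^sup>2 \<le> (C + 1) * Re (cinner x (R x))"
      by (simp only: mult_le_cancel_left_pos)
    thus ?thesis by (simp add: y_def)
  qed
  thus ?thesis using that[of "C + 1"] C(1) by simp
qed

section \<open>The binomial series of \<open>\<surd>(1 - y)\<close> in a Banach algebra\<close>

text \<open>Coefficients of \<open>\<surd>(1 - t) = \<Sum>n. sqrt_coeff n * t ^ n\<close>.\<close>
definition sqrt_coeff :: "nat \<Rightarrow> real" where
  "sqrt_coeff n = (-1)^n * ((1/2) gchoose n)"

lemma gchoose_Suc_rec: "(a::real) gchoose (Suc k) = (a - of_nat k) * (a gchoose k) / of_nat (Suc k)"
  using gbinomial_mult_1[of a k] by (simp add: field_simps del: of_nat_Suc)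

lemma sqrt_coeff_0 [simp]: "sqrt_coeff 0 = 1"
  by (simp add: sqrt_coeff_def)

lemma sqrt_coeff_Suc: "sqrt_coeff (Suc k) = sqrt_coeff k * (of_nat k - 1/2) / of_nat (Suc k)"
  unfolding sqrt_coeff_def gchoose_Suc_rec by (simp add: field_simps del: of_nat_Suc)

lemma sqrt_coeff_nonpos: "n \<ge> 1 \<Longrightarrow> sqrt_coeff n \<le> 0"
proof (induction n)
  case (Suc n)
  show ?case
  proof (cases "n = 0")
    case False
    hence "sqrt_coeff n \<le> 0" "of_nat n - 1/2 \<ge> (0::real)" using Suc by auto
    thus ?thesis unfolding sqrt_coeff_Suc by (simp add: divide_nonpos_pos mult_nonpos_nonneg)
  qed (simp add: sqrt_coeff_Suc)
qed simp

text \<open>\<dots> and the partial sums stay nonnegative (they are the coefficients of \<open>\<surd>(1-t)/(1-t)\<close>),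
  hence the coefficients are absolutely summable with \<open>\<Sum>n. \<bar>sqrt_coeff n\<bar> \<le> 2\<close>.\<close>
lemma sqrt_coeff_partial_sum_nonneg: "0 \<le> (\<Sum>k\<le>m. sqrt_coeff k)"
proof -
  have eq: "(\<Sum>k\<le>m. sqrt_coeff k) = (-1)^m * ((-1/2) gchoose m)"
    using gbinomial_sum_lower_neg[of "1/2::real" m] by (simp add: sqrt_coeff_def mult.commute)
  have "0 \<le> (-1)^m * ((-1/2::real) gchoose m)"
  proof (induction m)
    case (Suc m)
    have "(-1::real)^Suc m * ((-1/2) gchoose Suc m)
        = ((-1)^m * ((-1/2) gchoose m)) * ((of_nat m + 1/2) / of_nat (Suc m))"
      unfolding gchoose_Suc_rec by (simp add: field_simps del: of_nat_Suc)
    also have "\<dots> \<ge> 0" by (rule mult_nonneg_nonneg[OF Suc.IH]) (auto intro: divide_nonneg_pos)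
    finally show ?case .
  qed simp
  thus ?thesis using eq by simp
qed

lemma sqrt_coeff_abs_partial_sum: "(\<Sum>k<m. \<bar>sqrt_coeff k\<bar>) \<le> 2"
proof (cases m)
  case (Suc n)
  have abs_eq: "\<bar>sqrt_coeff k\<bar> = (if k = 0 then 2 else 0) - sqrt_coeff k" for k
    using sqrt_coeff_nonpos[of k] by (cases "k = 0") auto
  have "(\<Sum>k\<le>n. \<bar>sqrt_coeff k\<bar>) = (\<Sum>k\<le>n. (if k = 0 then 2 else 0)) - (\<Sum>k\<le>n. sqrt_coeff k)"
    by (simp add: abs_eq sum_subtractf)
  also have "(\<Sum>k\<le>n. (if k = 0 then 2 else (0::real))) = 2"
    by (simp add: sum.delta)
  finally show ?thesis using Suc sqrt_coeff_partial_sum_nonneg[of n]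
    by (simp add: lessThan_Suc_atMost)
qed simp

lemma summable_abs_sqrt_coeff: "summable (\<lambda>k. \<bar>sqrt_coeff k\<bar>)"
  by (rule summableI_nonneg_bounded[OF _ sqrt_coeff_abs_partial_sum]) simp

lemma suminf_abs_sqrt_coeff: "(\<Sum>k. \<bar>sqrt_coeff k\<bar>) \<le> 2"
  using summable_abs_sqrt_coeff sqrt_coeff_abs_partial_sum by (intro suminf_le_const) auto

text \<open>The Cauchy square of the coefficient sequence is that of \<open>1 - t\<close> (Vandermonde).\<close>
lemma sqrt_coeff_cauchy_square:
  "(\<Sum>i\<le>n. sqrt_coeff i * sqrt_coeff (n - i)) = (-1)^n * real (1 choose n)"
proof -
  have "(\<Sum>i\<le>n. sqrt_coeff i * sqrt_coeff (n - i))
      = (\<Sum>i\<le>n. (-1)^n * (((1/2::real) gchoose i) * ((1/2) gchoose (n - i))))"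
  proof (rule sum.cong[OF refl])
    fix i assume "i \<in> {..n}"
    hence "(-1::real)^i * (-1)^(n-i) = (-1)^n" by (simp flip: power_add)
    thus "sqrt_coeff i * sqrt_coeff (n - i) = (-1)^n * (((1/2::real) gchoose i) * ((1/2) gchoose (n - i)))"
      unfolding sqrt_coeff_def by (metis (no_types, lifting) mult.assoc mult.left_commute)
  qed
  also have "\<dots> = (-1)^n * ((of_nat 1::real) gchoose n)"
    using gbinomial_Vandermonde[of "1/2::real" "1/2" n]
    by (simp add: sum_distrib_left[symmetric] atMost_atLeast0)
  finally show ?thesis by (simp only: binomial_gbinomial[symmetric])
qed

lemma sqrt_series:
  fixes y :: "'b::{real_normed_algebra, monoid_mult, banach}"
  assumes n1: "norm (1::'b) \<le> 1" and ny: "norm y \<le> 1"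
  shows "summable (\<lambda>n. norm (sqrt_coeff n *\<^sub>R y ^ n))"
    and "(\<Sum>n. sqrt_coeff n *\<^sub>R y ^ n) * (\<Sum>n. sqrt_coeff n *\<^sub>R y ^ n) = 1 - y"
proof -
  have pw: "norm (y ^ n) \<le> 1" for n
  proof (induction n)
    case (Suc n)
    have "norm (y ^ Suc n) \<le> norm y * norm (y ^ n)" by (simp add: norm_mult_ineq)
    also have "\<dots> \<le> 1 * 1" using Suc ny by (intro mult_mono) auto
    finally show ?case by simp
  qed (use n1 in simp)
  show sm: "summable (\<lambda>n. norm (sqrt_coeff n *\<^sub>R y ^ n))"
    by (rule summable_comparison_test[OF _ summable_abs_sqrt_coeff])
       (use pw in \<open>auto intro!: exI[of _ 0] mult_left_le\<close>)
  have "(\<Sum>n. sqrt_coeff n *\<^sub>R y ^ n) * (\<Sum>n. sqrt_coeff n *\<^sub>R y ^ n)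
      = (\<Sum>k. \<Sum>i\<le>k. (sqrt_coeff i *\<^sub>R y ^ i) * (sqrt_coeff (k - i) *\<^sub>R y ^ (k - i)))"
    by (rule Cauchy_product[OF sm sm])
  also have "\<dots> = (\<Sum>k. ((-1)^k * real (1 choose k)) *\<^sub>R y ^ k)"
  proof (rule suminf_cong)
    fix k
    have "(sqrt_coeff i *\<^sub>R y ^ i) * (sqrt_coeff (k - i) *\<^sub>R y ^ (k - i))
        = (sqrt_coeff i * sqrt_coeff (k - i)) *\<^sub>R y ^ k" if "i \<le> k" for i
      using that by (simp flip: power_add)
    thus "(\<Sum>i\<le>k. (sqrt_coeff i *\<^sub>R y ^ i) * (sqrt_coeff (k - i) *\<^sub>R y ^ (k - i)))
        = ((-1)^k * real (1 choose k)) *\<^sub>R y ^ k"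
      by (simp add: scaleR_sum_left[symmetric] sqrt_coeff_cauchy_square)
  qed
  also have "\<dots> = (\<Sum>k\<in>{0,1}. ((-1)^k * real (1 choose k)) *\<^sub>R y ^ k)"
    by (rule suminf_finite) (auto simp: binomial_eq_0)
  also have "\<dots> = 1 - y" by simp
  finally show "(\<Sum>n. sqrt_coeff n *\<^sub>R y ^ n) * (\<Sum>n. sqrt_coeff n *\<^sub>R y ^ n) = 1 - y" .
qed

section \<open>Bounded operators as a Banach algebra\<close>

text \<open>The library's bounded linear maps \<open>'h \<Rightarrow>\<^sub>L 'h\<close> form a Banach space; a copy of this type
  with composition as multiplication is a Banach algebra, where the binomial series applies.\<close>
typedef (overloaded) ('h::real_normed_vector) endo = "UNIV :: ('h \<Rightarrow>\<^sub>L 'h) set"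
  morphisms endo_blinfun Endo by simp

setup_lifting type_definition_endo

instantiation endo :: (real_normed_vector) real_normed_vector
begin
lift_definition norm_endo :: "'a endo \<Rightarrow> real" is norm .
lift_definition minus_endo :: "'a endo \<Rightarrow> 'a endo \<Rightarrow> 'a endo" is "(-)" .
lift_definition plus_endo :: "'a endo \<Rightarrow> 'a endo \<Rightarrow> 'a endo" is "(+)" .
lift_definition uminus_endo :: "'a endo \<Rightarrow> 'a endo" is "uminus" .
lift_definition zero_endo :: "'a endo" is "0" .
lift_definition scaleR_endo :: "real \<Rightarrow> 'a endo \<Rightarrow> 'a endo" is "scaleR" .
definition dist_endo :: "'a endo \<Rightarrow> 'a endo \<Rightarrow> real" where "dist_endo a b = norm (a - b)"
definition sgn_endo :: "'a endo \<Rightarrow> 'a endo" where "sgn_endo x = scaleR (inverse (norm x)) x"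
definition uniformity_endo :: "('a endo \<times> 'a endo) filter" where
  "uniformity_endo = (INF e\<in>{0 <..}. principal {(x, y). dist x y < e})"
definition open_endo :: "'a endo set \<Rightarrow> bool" where
  "open_endo S = (\<forall>x\<in>S. \<forall>\<^sub>F (x', y) in uniformity. x' = x \<longrightarrow> y \<in> S)"
instance
  by standard
     (unfold dist_endo_def open_endo_def sgn_endo_def uniformity_endo_def,
      (transfer; simp add: algebra_simps norm_triangle_ineq)+)
end

instantiation endo :: (real_normed_vector) "{real_normed_algebra, monoid_mult}"
begin
lift_definition times_endo :: "'a endo \<Rightarrow> 'a endo \<Rightarrow> 'a endo" is "blinfun_compose" .
lift_definition one_endo :: "'a endo" is "id_blinfun" .
instance
  by standard
     ((transfer; rule blinfun_eqI; simp add: blinfun.bilinear_simps)+,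
      transfer, rule norm_blinfun_compose)
end

instance endo :: (banach) banach
proof
  fix X :: "nat \<Rightarrow> 'a endo"
  assume "Cauchy X"
  have dist_eq: "dist (endo_blinfun a) (endo_blinfun b) = dist a b" for a b :: "'a endo"
    by (simp add: dist_norm dist_endo_def norm_endo.rep_eq minus_endo.rep_eq)
  have "Cauchy (\<lambda>n. endo_blinfun (X n))" using \<open>Cauchy X\<close> unfolding Cauchy_def dist_eq .
  then obtain L where "(\<lambda>n. endo_blinfun (X n)) \<longlonglongrightarrow> L"
    using convergent_def Cauchy_convergent_iff by blast
  hence "X \<longlonglongrightarrow> Endo L"
    unfolding tendsto_iff by (simp add: dist_eq[symmetric] Endo_inverse)
  thus "convergent X" unfolding convergent_def by blast
qed

definition apply_endo :: "'h::real_normed_vector endo \<Rightarrow> 'h \<Rightarrow> 'h" where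
  "apply_endo a = blinfun_apply (endo_blinfun a)"

lemma bounded_linear_apply_endo: "bounded_linear (\<lambda>a. apply_endo a x)"
  by (rule bounded_linear_intro[of _ "norm x"])
     (auto simp: apply_endo_def plus_endo.rep_eq scaleR_endo.rep_eq blinfun.add_left
       blinfun.scaleR_left norm_endo.rep_eq norm_blinfun)

lemma norm_one_endo: "norm (1::'h::real_normed_vector endo) \<le> 1"
  by (simp add: norm_endo.rep_eq one_endo.rep_eq norm_blinfun_id_le)

lemma apply_endo_mult: "apply_endo (a * b) x = apply_endo a (apply_endo b x)"
  by (simp add: apply_endo_def times_endo.rep_eq)

lemma apply_endo_one: "apply_endo 1 x = x"
  by (simp add: apply_endo_def one_endo.rep_eq)

lemma apply_endo_diff: "apply_endo (a - b) x = apply_endo a x - apply_endo b x"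
  by (simp add: apply_endo_def minus_endo.rep_eq blinfun.diff_left)

lemma apply_endo_scaleR: "apply_endo (r *\<^sub>R a) x = r *\<^sub>R apply_endo a x"
  by (simp add: apply_endo_def scaleR_endo.rep_eq blinfun.scaleR_left)

lemma apply_Endo: "bounded_op T \<Longrightarrow> apply_endo (Endo (Blinfun T)) = T"
  by (simp add: apply_endo_def Endo_inverse bounded_linear_Blinfun_apply bounded_op_bounded_linear)

lemma norm_Endo_le:
  assumes "bounded_op T" "c \<ge> 0" "\<And>x. norm (T x) \<le> c * norm x"
  shows "norm (Endo (Blinfun T)) \<le> c"
  unfolding norm_endo.rep_eq
  by (rule norm_blinfun_bound) (simp_all add: assms apply_Endo[OF assms(1), unfolded apply_endo_def])

section \<open>Positive square roots of positive operators\<close>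

text \<open>Square root of a bounded positive operator \<open>P\<close> with \<open>\<parallel>P x\<parallel>\<^sup>2 \<le> K \<langle>x, P x\<rangle>\<close>: the
  operator \<open>Y = 1 - P/K\<close> is a self-adjoint contraction, so the binomial series of
  \<open>\<surd>(1 - Y)\<close> converges in the operator algebra and \<open>Q = \<surd>K \<surd>(1 - Y)\<close> squares to \<open>P\<close>.
  Every bounded operator \<open>R\<close> with \<open>R\<^sup>2 = P\<close> commutes with \<open>Y\<close>, hence with \<open>Q\<close>; this yields
  uniqueness of the positive square root.\<close>
locale sqrt_construction =
  fixes P :: "'h::chilbert_space \<Rightarrow> 'h" and K :: real
  assumes P_bounded: "bounded_op P" and P_positive: "positive_op P" and K_pos: "K > 0"
    and P_norm_bound: "\<And>x. (norm (P x))\<^sup>2 \<le> K * Re (cinner x (P x))"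
begin

definition Y :: "'h \<Rightarrow> 'h" where "Y x = x - scaleR (1/K) (P x)"

lemma P_selfadjoint: "cinner (P x) z = cinner x (P z)"
  by (rule positive_op_selfadjoint[OF P_bounded P_positive])

lemma Y_bounded: "bounded_op Y"
proof -
  obtain C where C: "C \<ge> 0" "\<And>x. norm (P x) \<le> C * norm x"
    using bounded_op_bound[OF P_bounded] by blast
  have "norm (Y x) \<le> (1 + C / K) * norm x" for x
  proof -
    have "norm (Y x) \<le> norm x + (1/K) * norm (P x)"
      unfolding Y_def using norm_triangle_ineq4[of x "scaleR (1/K) (P x)"] K_pos by simp
    also have "\<dots> \<le> norm x + (1/K) * (C * norm x)" using C(2)[of x] K_pos by (simp add: divide_right_mono)
    finally show ?thesis by (simp add: algebra_simps)
  qed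
  thus ?thesis unfolding bounded_op_def
    by (auto simp: Y_def bounded_op_add[OF P_bounded] bounded_op_scaleC[OF P_bounded]
        scaleC_diff_right scaleC_scaleR_commute scaleR_add_right)
qed

lemma Y_selfadjoint: "cinner (Y x) z = cinner x (Y z)"
  by (simp add: Y_def cinner_diff_left cinner_diff_right cinner_scaleR_left cinner_scaleR_right
      P_selfadjoint)

text \<open>\<open>\<parallel>Y x\<parallel>\<^sup>2 = \<parallel>x\<parallel>\<^sup>2 - 2\<langle>x,Px\<rangle>/K + \<parallel>Px\<parallel>\<^sup>2/K\<^sup>2 \<le> \<parallel>x\<parallel>\<^sup>2 - \<langle>x,Px\<rangle>/K\<close>.\<close>
lemma Y_contraction: "norm (Y x) \<le> norm x"
proof -
  define r where "r = Re (cinner x (P x))"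
  have r: "r \<ge> 0" using P_positive by (simp add: r_def positive_op_def)
  have "(norm (Y x))\<^sup>2 = Re (cinner (Y x) (Y x))" by (simp add: Re_cinner_self)
  also have "\<dots> = (norm x)\<^sup>2 - 2 * r / K + (norm (P x))\<^sup>2 / K\<^sup>2"
    using P_selfadjoint[of x x] K_pos
    by (simp add: Re_cinner_self Y_def cinner_diff_left cinner_diff_right
        cinner_scaleR_left cinner_scaleR_right r_def power2_eq_square field_simps)
  also have "(norm (P x))\<^sup>2 / K\<^sup>2 \<le> (K * r) / K\<^sup>2"
    using P_norm_bound[of x] K_pos by (simp add: r_def divide_right_mono)
  also have "(K * r) / K\<^sup>2 = r / K" using K_pos by (simp add: power2_eq_square)
  finally have "(norm (Y x))\<^sup>2 \<le> (norm x)\<^sup>2 - r / K" by simp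
  also have "\<dots> \<le> (norm x)\<^sup>2" using r K_pos by simp
  finally show ?thesis by (rule power2_le_imp_le) simp
qed

lemma Y_power_selfadjoint: "cinner ((Y ^^ n) x) z = cinner x ((Y ^^ n) z)"
  by (induction n arbitrary: x z) (simp_all add: Y_selfadjoint funpow_swap1)

lemma Y_power_contraction: "norm ((Y ^^ n) x) \<le> norm x"
  by (induction n) (auto intro: order_trans[OF Y_contraction])

definition Y_endo :: "'h endo" where "Y_endo = Endo (Blinfun Y)"

lemma apply_Y_endo_power: "apply_endo (Y_endo ^ n) x = (Y ^^ n) x"
  by (induction n arbitrary: x)
     (simp_all add: apply_endo_mult apply_endo_one Y_endo_def apply_Endo[OF Y_bounded])

lemma norm_Y_endo: "norm Y_endo \<le> 1"
  unfolding Y_endo_def by (rule norm_Endo_le[OF Y_bounded]) (simp_all add: Y_contraction)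

definition S_endo :: "'h endo" where "S_endo = (\<Sum>n. sqrt_coeff n *\<^sub>R Y_endo ^ n)"

lemma summable_S_endo: "summable (\<lambda>n. sqrt_coeff n *\<^sub>R Y_endo ^ n)"
  using sqrt_series(1)[OF norm_one_endo norm_Y_endo] by (rule summable_norm_cancel)

text \<open>The operator \<open>S = \<surd>(1 - Y) = \<surd>(P/K)\<close>, evaluated pointwise.\<close>
definition S :: "'h \<Rightarrow> 'h" where "S x = apply_endo S_endo x"

lemma S_series_summable: "summable (\<lambda>n. sqrt_coeff n *\<^sub>R (Y ^^ n) x)"
  using bounded_linear.summable[OF bounded_linear_apply_endo summable_S_endo, of x]
  by (simp add: apply_endo_scaleR apply_Y_endo_power)

lemma S_series: "S x = (\<Sum>n. sqrt_coeff n *\<^sub>R (Y ^^ n) x)"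
  using bounded_linear.suminf[OF bounded_linear_apply_endo summable_S_endo, of x]
  by (simp add: S_def S_endo_def apply_endo_scaleR apply_Y_endo_power)

lemma S_square: "S (S x) = scaleR (1/K) (P x)"
proof -
  have "S (S x) = apply_endo (S_endo * S_endo) x" by (simp add: S_def apply_endo_mult)
  also have "\<dots> = x - Y x"
    unfolding S_endo_def sqrt_series(2)[OF norm_one_endo norm_Y_endo]
    using apply_Y_endo_power[of 1] by (simp add: apply_endo_diff apply_endo_one)
  finally show ?thesis by (simp add: Y_def)
qed

lemma S_bounded: "bounded_op S"
proof -
  have "S (scaleC a x) = scaleC a (S x)" for a x
  proof -
    have "scaleC a (S x) = (\<Sum>n. scaleC a (sqrt_coeff n *\<^sub>R (Y ^^ n) x))"
      unfolding S_series by (rule bounded_linear.suminf[OF bounded_linear_scaleC S_series_summable])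
    also have "\<dots> = (\<Sum>n. sqrt_coeff n *\<^sub>R (Y ^^ n) (scaleC a x))"
      using bounded_op_funpow[OF Y_bounded] by (simp add: bounded_op_scaleC scaleC_scaleR_commute)
    finally show ?thesis by (simp add: S_series)
  qed
  moreover have "S (x + z) = S x + S z" for x z
    by (simp add: S_def apply_endo_def blinfun.add_right)
  moreover have "norm (S x) \<le> norm (endo_blinfun S_endo) * norm x" for x
    unfolding S_def apply_endo_def by (rule norm_blinfun)
  ultimately show ?thesis unfolding bounded_op_def by blast
qed

lemma S_selfadjoint: "cinner (S x) z = cinner x (S z)"
proof -
  have "cinner (S x) z = (\<Sum>n. cinner (sqrt_coeff n *\<^sub>R (Y ^^ n) x) z)"
    unfolding S_series by (rule bounded_linear.suminf[OF bounded_linear_cinner_left S_series_summable])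
  also have "\<dots> = (\<Sum>n. cinner x (sqrt_coeff n *\<^sub>R (Y ^^ n) z))"
    by (simp add: cinner_scaleR_left cinner_scaleR_right Y_power_selfadjoint)
  also have "\<dots> = cinner x (S z)"
    unfolding S_series
    by (rule bounded_linear.suminf[OF bounded_linear_cinner_right S_series_summable, symmetric])
  finally show ?thesis .
qed

text \<open>Positivity: \<open>\<langle>x, S x\<rangle> = \<Sum> sqrt_coeff n \<langle>x, Y^n x\<rangle> \<ge> 2\<parallel>x\<parallel>\<^sup>2 - (\<Sum>\<bar>sqrt_coeff n\<bar>) \<parallel>x\<parallel>\<^sup>2 \<ge> 0\<close>,
  because all coefficients but the first are \<open>\<le> 0\<close> and \<open>|\<langle>x, Y^n x\<rangle>| \<le> \<parallel>x\<parallel>\<^sup>2\<close>.\<close>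
lemma S_positive: "positive_op S"
  unfolding positive_op_def
proof (intro allI conjI)
  fix x
  show "cinner x (S x) \<in> \<real>"
    by (metis Reals_cnj_iff S_selfadjoint cinner_cnj)
  let ?t = "\<lambda>n. Re (cinner x ((Y ^^ n) x))"
  have Re_cinner: "bounded_linear (\<lambda>v. Re (cinner x v))"
    using bounded_linear_compose[OF bounded_linear_Re bounded_linear_cinner_right[of x]]
    by (simp add: o_def)
  have eq: "Re (cinner x (S x)) = (\<Sum>n. sqrt_coeff n * ?t n)"
    using bounded_linear.suminf[OF Re_cinner S_series_summable]
    by (simp add: S_series cinner_scaleR_right)
  have summable_terms: "summable (\<lambda>n. sqrt_coeff n * ?t n)"
    using bounded_linear.summable[OF Re_cinner S_series_summable] by (simp add: cinner_scaleR_right)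
  have t_bound: "\<bar>?t n\<bar> \<le> (norm x)\<^sup>2" for n
  proof -
    have "\<bar>?t n\<bar> \<le> norm x * norm ((Y ^^ n) x)"
      using abs_Re_le_cmod cauchy_schwarz order_trans by blast
    also have "\<dots> \<le> norm x * norm x" by (intro mult_left_mono Y_power_contraction) simp
    finally show ?thesis by (simp add: power2_eq_square)
  qed
  define g where "g n = (if n = 0 then 2 * (norm x)\<^sup>2 else 0) - \<bar>sqrt_coeff n\<bar> * (norm x)\<^sup>2" for n
  have g_le: "g n \<le> sqrt_coeff n * ?t n" for n
  proof (cases "n = 0")
    case False
    have "- (\<bar>sqrt_coeff n\<bar> * (norm x)\<^sup>2) \<le> - (\<bar>sqrt_coeff n\<bar> * \<bar>?t n\<bar>)"
      using t_bound[of n] by (simp add: mult_left_mono)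
    also have "\<dots> \<le> sqrt_coeff n * ?t n" by (simp add: abs_mult[symmetric])
    finally show ?thesis using False by (simp add: g_def)
  qed (simp add: g_def Re_cinner_self)
  have summable_delta: "summable (\<lambda>n. (if n = 0 then 2 * (norm x)\<^sup>2 else (0::real)))"
    by (rule summable_finite[of "{0}"]) auto
  have summable_abs: "summable (\<lambda>n. \<bar>sqrt_coeff n\<bar> * (norm x)\<^sup>2)"
    using summable_abs_sqrt_coeff by (rule summable_mult2)
  have "(\<Sum>n. g n) = 2 * (norm x)\<^sup>2 - (\<Sum>n. \<bar>sqrt_coeff n\<bar>) * (norm x)\<^sup>2"
    unfolding g_def suminf_diff[OF summable_delta summable_abs, symmetric]
      suminf_mult2[OF summable_abs_sqrt_coeff, symmetric]
    by (subst suminf_finite[of "{0}"]) auto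
  also have "\<dots> \<ge> 0"
    using mult_right_mono[OF suminf_abs_sqrt_coeff, of "(norm x)\<^sup>2"] by simp
  finally have "0 \<le> (\<Sum>n. g n)" .
  also have "(\<Sum>n. g n) \<le> (\<Sum>n. sqrt_coeff n * ?t n)"
    by (rule suminf_le[OF g_le _ summable_terms]) (unfold g_def, intro summable_diff summable_delta summable_abs)
  finally show "0 \<le> Re (cinner x (S x))" using eq by simp
qed

definition Q :: "'h \<Rightarrow> 'h" where "Q x = scaleR (sqrt K) (S x)"

lemma Q_bounded: "bounded_op Q"
proof -
  obtain C where C: "\<And>x. norm (S x) \<le> C * norm x" using bounded_op_bound[OF S_bounded] by blast
  have "norm (Q x) \<le> (sqrt K * C) * norm x" for x
    using C[of x] K_pos by (simp add: Q_def mult.assoc mult_left_mono)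
  thus ?thesis unfolding bounded_op_def
    by (auto simp: Q_def bounded_op_add[OF S_bounded] bounded_op_scaleC[OF S_bounded]
        scaleC_scaleR_commute scaleR_add_right)
qed

lemma Q_positive: "positive_op Q"
  using S_positive K_pos by (auto simp: positive_op_def Q_def cinner_scaleR_right)

lemma Q_square: "Q \<circ> Q = P"
  using K_pos by (auto simp: Q_def bounded_op_scaleR[OF S_bounded] S_square)

text \<open>A bounded \<open>R\<close> with \<open>R\<^sup>2 = P\<close> commutes with \<open>P\<close>, with all powers of \<open>Y\<close>, and hence
  (by continuity of \<open>R\<close>) with the series defining \<open>Q\<close>.\<close>
lemma Q_commute:
  assumes R: "bounded_op R" and RR: "R \<circ> R = P"
  shows "R (Q x) = Q (R x)"
proof -
  have RP: "R (P x) = P (R x)" for x using RR by (metis comp_apply)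
  have RY: "R (Y x) = Y (R x)" for x
    by (simp add: Y_def bounded_op_diff[OF R] bounded_op_scaleR[OF R] RP)
  have RYn: "R ((Y ^^ n) x) = (Y ^^ n) (R x)" for n x
    by (induction n arbitrary: x) (auto simp: RY)
  have "R (S x) = (\<Sum>n. R (sqrt_coeff n *\<^sub>R (Y ^^ n) x))"
    unfolding S_series
    by (rule bounded_linear.suminf[OF bounded_op_bounded_linear[OF R] S_series_summable])
  also have "\<dots> = S (R x)"
    by (simp add: S_series bounded_op_scaleR[OF R] RYn)
  finally show ?thesis by (simp add: Q_def bounded_op_scaleR[OF R])
qed

text \<open>Uniqueness: for \<open>d = R x - Q x\<close>, \<open>\<langle>d, R d\<rangle> + \<langle>d, Q d\<rangle> = \<langle>d, (R\<^sup>2 - Q\<^sup>2) x\<rangle> = 0\<close>, so both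
  positive forms vanish at \<open>d\<close>, whence \<open>R d = Q d = 0\<close> and \<open>\<parallel>d\<parallel>\<^sup>2 = \<langle>R d - Q d, x\<rangle> = 0\<close>.\<close>
lemma Q_unique:
  assumes R: "bounded_op R" and Rp: "positive_op R" and RR: "R \<circ> R = P"
  shows "R = Q"
proof
  fix x
  define d where "d = R x - Q x"
  have RRx: "R (R x) = P x" using RR by (metis comp_apply)
  have QQx: "Q (Q x) = P x" using Q_square by (metis comp_apply)
  have "cinner d (R d) + cinner d (Q d) = cinner d (R (R x) - R (Q x) + Q (R x) - Q (Q x))"
    by (simp add: d_def bounded_op_diff[OF R] bounded_op_diff[OF Q_bounded] cinner_add_right
        cinner_diff_right algebra_simps)
  also have "\<dots> = 0" by (simp add: RRx QQx Q_commute[OF R RR])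
  finally have sum0: "cinner d (R d) + cinner d (Q d) = 0" .
  have "cinner d (R d) \<in> \<real>" "Re (cinner d (R d)) \<ge> 0"
    and "cinner d (Q d) \<in> \<real>" "Re (cinner d (Q d)) \<ge> 0"
    using Rp Q_positive by (auto simp: positive_op_def)
  with sum0 have "cinner d (R d) = 0" "cinner d (Q d) = 0"
    by (auto simp: complex_is_Real_iff complex_eq_iff)
  hence Rd: "R d = 0" and Qd: "Q d = 0"
    using positive_op_form_zero[OF R Rp] positive_op_form_zero[OF Q_bounded Q_positive] by auto
  have "cinner d d = cinner (R d) x - cinner (Q d) x"
    by (simp add: d_def cinner_diff_right positive_op_selfadjoint[OF R Rp]
        positive_op_selfadjoint[OF Q_bounded Q_positive])
  also have "\<dots> = 0" by (simp add: Rd Qd)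
  finally have "d = 0" by (rule cinner_self_zero)
  thus "R x = Q x" by (simp add: d_def)
qed

lemma ex1_positive_sqrt: "\<exists>!R. bounded_op R \<and> positive_op R \<and> R \<circ> R = P"
  using Q_bounded Q_positive Q_square Q_unique by blast

end

text \<open>Every bounded positive operator has a unique bounded positive square root, so
  \<open>op_sqrt P\<close> is one.\<close>
lemma op_sqrt:
  assumes "bounded_op P" "positive_op P"
  shows "bounded_op (op_sqrt P) \<and> positive_op (op_sqrt P) \<and> op_sqrt P \<circ> op_sqrt P = P"
proof -
  obtain K where "K > 0" "\<And>x. (norm (P x))\<^sup>2 \<le> K * Re (cinner x (P x))"
    using positive_op_norm_square_bound[OF assms] by blast
  then interpret sqrt_construction P K using assms by unfold_locales
  show ?thesis unfolding op_sqrt_def by (rule theI'[OF ex1_positive_sqrt])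
qed

lemma op_adjoint_eqI:
  assumes "\<And>x y. cinner (T x) y = cinner x (T' y)"
  shows "op_adjoint T = T'"
  unfolding op_adjoint_def
proof (rule the_equality)
  show "\<forall>x y. cinner (T x) y = cinner x (T' y)" using assms by blast
  fix S assume "\<forall>x y. cinner (T x) y = cinner x (S y)"
  hence "\<And>x y. cinner x (S y) = cinner x (T' y)" using assms by metis
  thus "S = T'" by (intro ext cinner_ext) blast
qed

lemma op_le_scalar:
  assumes p: "positive_op R" and bound: "\<And>x. norm (R x) \<le> c * norm x"
  shows "op_le R (\<lambda>x. scaleC (complex_of_real c) x)"
  unfolding op_le_def positive_op_def
proof (intro allI conjI)
  fix x
  have form: "cinner x (scaleC (complex_of_real c) x - R x) = of_real (c * (norm x)\<^sup>2) - cinner x (R x)"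
    by (simp add: cinner_diff_right cinner_scaleC_right cinner_self)
  show "cinner x (scaleC (complex_of_real c) x - R x) \<in> \<real>"
    unfolding form using p by (simp add: positive_op_def)
  have "Re (cinner x (R x)) \<le> norm x * norm (R x)"
    using complex_Re_le_cmod cauchy_schwarz order_trans by blast
  also have "\<dots> \<le> norm x * (c * norm x)" by (rule mult_left_mono[OF bound]) simp
  finally show "0 \<le> Re (cinner x (scaleC (complex_of_real c) x - R x))"
    unfolding form by (simp add: power2_eq_square algebra_simps)
qed

text \<open>If \<open>\<parallel>T\<parallel> \<le> c\<close> and \<open>T\<close> has a bounded adjoint \<open>T'\<close>, then \<open>|T| = (T'T)^(1/2) \<le> c I\<close>:
  indeed \<open>\<parallel>|T| x\<parallel>\<^sup>2 = \<langle>x, T'T x\<rangle> = \<parallel>T x\<parallel>\<^sup>2\<close>.\<close>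
lemma op_abs_le_scalar:
  fixes T T' :: "'h::chilbert_space \<Rightarrow> 'h"
  assumes T: "bounded_op T" and T': "bounded_op T'"
    and adjoint: "\<And>x y. cinner (T x) y = cinner x (T' y)"
    and c: "c \<ge> 0" and bound: "\<And>x. norm (T x) \<le> c * norm x"
  shows "op_le (op_abs T) (\<lambda>x. scaleC (complex_of_real c) x)"
proof -
  define P where "P = T' \<circ> T"
  have P_form: "cinner x (P x) = of_real ((norm (T x))\<^sup>2)" for x
    by (simp add: P_def adjoint[symmetric] cinner_self)
  have "bounded_op P" unfolding P_def by (rule bounded_op_comp[OF T' T])
  moreover have "positive_op P" by (simp add: positive_op_def P_form)
  ultimately have sqrt_P: "bounded_op (op_sqrt P) \<and> positive_op (op_sqrt P) \<and> op_sqrt P \<circ> op_sqrt P = P"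
    by (rule op_sqrt)
  have "op_abs T = op_sqrt P" by (simp add: op_abs_def op_adjoint_eqI[OF adjoint] P_def)
  hence R: "bounded_op (op_abs T)" "positive_op (op_abs T)" "op_abs T \<circ> op_abs T = P"
    using sqrt_P by simp_all
  have "norm (op_abs T x) \<le> c * norm x" for x
  proof -
    have "(norm (op_abs T x))\<^sup>2 = Re (cinner x (op_abs T (op_abs T x)))"
      by (simp add: Re_cinner_self[symmetric] positive_op_selfadjoint[OF R(1,2)])
    also have "\<dots> = (norm (T x))\<^sup>2" using R(3) by (metis P_form Re_complex_of_real comp_apply)
    also have "\<dots> \<le> (c * norm x)\<^sup>2" by (rule power_mono[OF bound]) simp
    finally show ?thesis by (rule power2_le_imp_le) (simp add: c)
  qed
  thus ?thesis by (rule op_le_scalar[OF R(2)])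
qed

lemma cstar_scaleR: "cstar (scaleR r x::'a::unital_cstar_algebra) = scaleR r (cstar x)"
  by (simp add: scaleR_scaleC cstar_scaleC)

lemma cstar_one [simp]: "cstar (1::'a::unital_cstar_algebra) = 1"
  by (metis cstar_cstar cstar_mult mult_1_right)

lemma norm_cstar [simp]: "norm (cstar x) = norm (x::'a::unital_cstar_algebra)"
proof -
  have le: "norm y \<le> norm (cstar y)" for y :: 'a
  proof (cases "y = 0")
    case False
    have "norm y * norm y = norm (cstar y * y)" by (simp add: cstar_identity power2_eq_square)
    also have "\<dots> \<le> norm (cstar y) * norm y" by (rule norm_mult_ineq)
    finally show ?thesis using False by simp
  qed simp
  show ?thesis using le[of x] le[of "cstar x"] by (simp add: cstar_cstar)
qed

lemma bounded_linear_cstar: "bounded_linear (cstar :: 'a::unital_cstar_algebra \<Rightarrow> 'a)"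
  by (rule bounded_linear_intro[of _ 1]) (auto simp: cstar_add cstar_scaleR)

lemma cstar_power: "cstar (y ^ n) = cstar (y::'a::unital_cstar_algebra) ^ n"
  by (induction n) (simp_all add: cstar_mult power_commutes)

text \<open>For \<open>\<parallel>c\<parallel> \<le> r\<close> the element \<open>r\<^sup>2 1 - c*c\<close> is positive: it equals \<open>D*D\<close> with
  \<open>D = r \<surd>(1 - c*c/r\<^sup>2)\<close>, a self-adjoint binomial series.\<close>
lemma cstar_norm_defect_square:
  fixes c :: "'a::unital_cstar_algebra"
  assumes r: "norm c \<le> r"
  obtains D where "(r\<^sup>2) *\<^sub>R 1 - cstar c * c = cstar D * D"
proof (cases "r = 0")
  case True
  hence "c = 0" using r by simp
  thus ?thesis using True that[of 0] by simp
next
  case False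
  hence rp: "r > 0" using r norm_ge_zero[of c] by linarith
  define y where "y = (1 / r\<^sup>2) *\<^sub>R (cstar c * c)"
  have ny: "norm y \<le> 1"
  proof -
    have "norm y = (norm c)\<^sup>2 / r\<^sup>2" using rp by (simp add: y_def cstar_identity)
    also have "\<dots> \<le> 1" using r rp by (simp add: power_mono)
    finally show ?thesis .
  qed
  have cy: "cstar y = y" by (simp add: y_def cstar_scaleR cstar_mult cstar_cstar)
  define S where "S = (\<Sum>n. sqrt_coeff n *\<^sub>R y ^ n)"
  have SS: "S * S = 1 - y" unfolding S_def by (rule sqrt_series(2)) (simp_all add: ny)
  have sm: "summable (\<lambda>n. sqrt_coeff n *\<^sub>R y ^ n)"
    by (rule summable_norm_cancel[OF sqrt_series(1)]) (simp_all add: ny)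
  have "cstar S = (\<Sum>n. cstar (sqrt_coeff n *\<^sub>R y ^ n))"
    unfolding S_def by (rule bounded_linear.suminf[OF bounded_linear_cstar sm])
  hence cS: "cstar S = S" by (simp add: S_def cstar_scaleR cstar_power cy)
  have "cstar (r *\<^sub>R S) * (r *\<^sub>R S) = (r * r) *\<^sub>R (S * S)" by (simp add: cstar_scaleR cS)
  also have "\<dots> = (r\<^sup>2) *\<^sub>R 1 - cstar c * c" using rp
    by (simp add: SS y_def power2_eq_square scaleR_diff_right)
  finally show ?thesis using that[of "r *\<^sub>R S"] by simp
qed

section \<open>Unital completely positive maps\<close>

context
  fixes \<Phi> :: "'a::unital_cstar_algebra \<Rightarrow> ('h::chilbert_space \<Rightarrow> 'h)"
  assumes ucp: "ucp_map \<Phi>"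
begin

lemma ucp_bounded: "bounded_op (\<Phi> a)"
  using ucp by (simp add: ucp_map_def)

lemma ucp_add: "\<Phi> (a + b) x = \<Phi> a x + \<Phi> b x"
  using ucp by (simp add: ucp_map_def)

lemma ucp_scaleC: "\<Phi> (scaleC c a) x = scaleC c (\<Phi> a x)"
  using ucp by (simp add: ucp_map_def)

lemma ucp_one: "\<Phi> 1 x = x"
  using ucp by (simp add: ucp_map_def)

lemma ucp_diff: "\<Phi> (a - b) x = \<Phi> a x - \<Phi> b x"
  using ucp_add[of a "- b" x] ucp_scaleC[of "-1" b x] by (simp add: scaleC_minus_one)

lemma ucp_scaleR: "\<Phi> (scaleR r a) x = scaleR r (\<Phi> a x)"
  by (simp add: scaleR_scaleC ucp_scaleC)

lemma ucp_gram_positive: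
  fixes n :: nat and e :: "nat \<Rightarrow> 'a" and v :: "nat \<Rightarrow> 'h"
  defines "s \<equiv> \<Sum>i<n. \<Sum>j<n. cinner (v i) (\<Phi> (cstar (e i) * e j) (v j))"
  shows "s \<in> \<real>" and "0 \<le> Re s"
proof -
  have "pos_matrix n (\<lambda>i j. cstar (e i) * e j)"
    unfolding pos_matrix_def
  proof (intro exI[of _ "\<lambda>k i. if k = 0 then e i else 0"] allI impI)
    fix i j assume "i < n" "j < n"
    have "(\<Sum>k<n. cstar (if k = 0 then e i else 0) * (if k = 0 then e j else 0))
        = (\<Sum>k<n. if k = 0 then cstar (e i) * e j else 0)"
      by (rule sum.cong) auto
    also have "\<dots> = cstar (e i) * e j" using \<open>i < n\<close> by (simp add: sum.delta)
    finally show "cstar (e i) * e j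
        = (\<Sum>k<n. cstar (if k = 0 then e i else 0) * (if k = 0 then e j else 0))" ..
  qed
  thus "s \<in> \<real>" "0 \<le> Re s" using ucp unfolding ucp_map_def s_def by blast+
qed

lemma ucp_positive: "cinner v (\<Phi> (cstar c * c) v) \<in> \<real>" "0 \<le> Re (cinner v (\<Phi> (cstar c * c) v))"
  using ucp_gram_positive[where e="\<lambda>_. c" and v="\<lambda>_. v" and n=1] by simp_all

text \<open>This follows from positivity on the Gram
  matrix of \<open>1, a\<close> with the vectors \<open>p, q\<close> and \<open>i p, q\<close>.\<close>
lemma ucp_adjoint: "cinner q (\<Phi> (cstar a) p) = cinner (\<Phi> a q) p"
proof -
  have real: "cinner p (\<Phi> a q) + cinner q (\<Phi> (cstar a) p) \<in> \<real>" for p q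
  proof -
    define v :: "nat \<Rightarrow> 'h" where "v k = (if k = 0 then p else q)" for k
    define e :: "nat \<Rightarrow> 'a" where "e k = (if k = 0 then 1 else a)" for k
    have "(\<Sum>i<2. \<Sum>j<2. cinner (v i) (\<Phi> (cstar (e i) * e j) (v j)))
        = cinner p p + (cinner p (\<Phi> a q) + cinner q (\<Phi> (cstar a) p)) + cinner q (\<Phi> (cstar a * a) q)"
      by (simp add: numeral_2_eq_2 ucp_one v_def e_def)
    moreover have "(\<Sum>i<2. \<Sum>j<2. cinner (v i) (\<Phi> (cstar (e i) * e j) (v j))) \<in> \<real>"
      by (rule ucp_gram_positive)
    ultimately show ?thesis using cinner_self_real[of p] ucp_positive(1)[of q a]
      by (metis Reals_diff add_diff_cancel_left' add_diff_cancel_right')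
  qed
  let ?p = "cinner p (\<Phi> a q)" and ?s = "cinner q (\<Phi> (cstar a) p)"
  have "- \<i> * ?p + \<i> * ?s \<in> \<real>"
    using real[of "scaleC \<i> p" q]
    by (simp add: cinner_scaleC_left cinner_scaleC_right bounded_op_scaleC[OF ucp_bounded])
  hence "?s = cnj ?p" using real[of p q] by (simp add: complex_is_Real_iff complex_eq_iff)
  thus ?thesis by (simp add: cinner_cnj)
qed

text \<open>Schwarz-type inequality for the defect \<open>\<Phi>(CD) - \<Phi>(C)\<Phi>(D)\<close>, obtained from positivity
  on the Gram matrix of \<open>1, C*, D\<close> with the vectors \<open>-(\<Phi>(C*)u + \<Phi>(D)w), u, w\<close>.\<close>
lemma ucp_defect_form_inequality:
  fixes C D :: 'a and u w :: 'h
  shows "0 \<le> Re (cinner u (\<Phi> (C * cstar C) u)) - (norm (\<Phi> (cstar C) u))\<^sup>2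
      + Re (cinner w (\<Phi> (cstar D * D) w)) - (norm (\<Phi> D w))\<^sup>2
      + 2 * Re (cinner u (\<Phi> (C * D) w - \<Phi> C (\<Phi> D w)))"
proof -
  define a where "a = \<Phi> (cstar C) u"
  define b where "b = \<Phi> D w"
  define z where "z = a + b"
  define v :: "nat \<Rightarrow> 'h" where "v k = (if k = 0 then - z else if k = 1 then u else w)" for k
  define e :: "nat \<Rightarrow> 'a" where "e k = (if k = 0 then 1 else if k = 1 then cstar C else D)" for k
  have hC: "cinner u (\<Phi> C z) = cinner a z"
    using ucp_adjoint[of u "cstar C" z] by (simp add: cstar_cstar a_def)
  have hD: "cinner w (\<Phi> (cstar D) z) = cinner b z"
    using ucp_adjoint[of w D z] by (simp add: b_def)
  have hCD: "cinner w (\<Phi> (cstar D * cstar C) u) = cnj (cinner u (\<Phi> (C * D) w))"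
    using ucp_adjoint[of w "C * D" u] by (simp add: cstar_mult cinner_cnj)
  have hab: "cinner a b = cinner u (\<Phi> C b)"
    using ucp_adjoint[of u "cstar C" b] by (simp add: cstar_cstar a_def)
  have "(\<Sum>i<3. \<Sum>j<3. cinner (v i) (\<Phi> (cstar (e i) * e j) (v j)))
      = cinner z z - cinner z a - cinner z b - cinner a z - cinner b z
        + cinner u (\<Phi> (C * cstar C) u) + cinner u (\<Phi> (C * D) w)
        + cnj (cinner u (\<Phi> (C * D) w)) + cinner w (\<Phi> (cstar D * D) w)"
    by (simp add: numeral_3_eq_3 v_def e_def ucp_one cstar_cstar bounded_op_minus[OF ucp_bounded]
        hC hD hCD cinner_minus_left cinner_minus_right a_def[symmetric] b_def[symmetric]
        algebra_simps)
  also have "cinner z z - cinner z a - cinner z b - cinner a z - cinner b z = - cinner z z"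
    by (simp add: z_def cinner_add_left cinner_add_right algebra_simps)
  finally have gram: "Re (\<Sum>i<3. \<Sum>j<3. cinner (v i) (\<Phi> (cstar (e i) * e j) (v j)))
      = - Re (cinner z z) + Re (cinner u (\<Phi> (C * cstar C) u)) + 2 * Re (cinner u (\<Phi> (C * D) w))
        + Re (cinner w (\<Phi> (cstar D * D) w))" by simp
  have "cinner z z = cinner a a + cinner b b + (cinner a b + cnj (cinner a b))"
    by (simp add: z_def cinner_add_left cinner_add_right cinner_cnj algebra_simps)
  hence "Re (cinner z z) = (norm a)\<^sup>2 + (norm b)\<^sup>2 + 2 * Re (cinner u (\<Phi> C b))"
    by (simp add: Re_cinner_self hab)
  thus ?thesis using ucp_gram_positive(2)[where n=3 and e=e and v=v] gram
    by (simp add: a_def b_def cinner_diff_right)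
qed

text \<open>\<open>\<Phi>(c*c) \<le> \<parallel>c\<parallel>\<^sup>2 I\<close>, since \<open>\<parallel>c\<parallel>\<^sup>2 1 - c*c\<close> is positive in the C*-algebra.\<close>
lemma ucp_form_le_norm_square:
  assumes "norm c \<le> r"
  shows "Re (cinner u (\<Phi> (cstar c * c) u)) \<le> r\<^sup>2 * (norm u)\<^sup>2"
proof -
  obtain D where D: "(r\<^sup>2) *\<^sub>R 1 - cstar c * c = cstar D * D"
    using cstar_norm_defect_square[OF assms] by blast
  have "0 \<le> Re (cinner u (\<Phi> (cstar D * D) u))" by (rule ucp_positive)
  also have "\<Phi> (cstar D * D) u = r\<^sup>2 *\<^sub>R u - \<Phi> (cstar c * c) u"
    by (simp flip: D add: ucp_diff ucp_scaleR ucp_one)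
  finally show ?thesis by (simp add: cinner_diff_right cinner_scaleR_right Re_cinner_self)
qed

text \<open>Take \<open>u = -t x\<close> with \<open>x\<close> the defect vector in the Schwarz-type
  inequality; the resulting quadratic in \<open>t\<close> has nonpositive discriminant.\<close>
lemma ucp_defect_norm_bound:
  assumes C: "norm C \<le> r1" and D: "norm D \<le> r2"
  shows "norm (\<Phi> (C * D) w - \<Phi> C (\<Phi> D w)) \<le> r1 * r2 * norm w"
proof -
  define x where "x = \<Phi> (C * D) w - \<Phi> C (\<Phi> D w)"
  define b where "b = (norm x)\<^sup>2"
  have r1: "r1 \<ge> 0" and r2: "r2 \<ge> 0" using C D norm_ge_zero order_trans by blast+
  have "0 \<le> (r1\<^sup>2 * b) * t\<^sup>2 - 2 * t * b + r2\<^sup>2 * (norm w)\<^sup>2" if t: "t \<ge> 0" for t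
  proof -
    define u where "u = scaleR (- t) x"
    have "Re (cinner u (\<Phi> (C * cstar C) u)) \<le> r1\<^sup>2 * (norm u)\<^sup>2"
      using ucp_form_le_norm_square[of "cstar C" r1 u] C by (simp add: cstar_cstar)
    moreover have "Re (cinner w (\<Phi> (cstar D * D) w)) \<le> r2\<^sup>2 * (norm w)\<^sup>2"
      using ucp_form_le_norm_square[OF D] .
    moreover have "(norm u)\<^sup>2 = t\<^sup>2 * b" using t by (simp add: u_def b_def power_mult_distrib)
    moreover have "Re (cinner u (\<Phi> (C * D) w - \<Phi> C (\<Phi> D w))) = - t * b"
      by (simp add: u_def x_def[symmetric] cinner_minus_left cinner_scaleR_left Re_cinner_self b_def)
    ultimately have "0 \<le> r1\<^sup>2 * (t\<^sup>2 * b) + r2\<^sup>2 * (norm w)\<^sup>2 + 2 * (- t * b)"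
      using ucp_defect_form_inequality[of u C w D] by (smt (verit) zero_le_power2)
    thus ?thesis by (simp add: algebra_simps)
  qed
  hence "b\<^sup>2 \<le> (r1\<^sup>2 * b) * (r2\<^sup>2 * (norm w)\<^sup>2)"
    by (intro quadratic_discriminant_le) (auto simp: b_def)
  hence ineq: "b * b \<le> b * (r1 * r2 * norm w)\<^sup>2" by (simp add: power2_eq_square algebra_simps)
  have "b \<le> (r1 * r2 * norm w)\<^sup>2"
  proof (cases "b = 0")
    case False
    hence "b > 0" by (simp add: b_def)
    thus ?thesis using ineq by (simp add: mult_le_cancel_left_pos)
  qed simp
  hence "(norm x)\<^sup>2 \<le> (r1 * r2 * norm w)\<^sup>2" by (simp add: b_def)
  thus ?thesis unfolding x_def by (rule power2_le_imp_le) (simp add: r1 r2)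
qed

lemma ucp_defect_shift:
  "\<Phi> ((C + scaleC \<mu> 1) * (D + scaleC \<nu> 1)) x - \<Phi> (C + scaleC \<mu> 1) (\<Phi> (D + scaleC \<nu> 1) x)
   = \<Phi> (C * D) x - \<Phi> C (\<Phi> D x)"
proof -
  have "(C + scaleC \<mu> 1) * (D + scaleC \<nu> 1) = C * D + scaleC \<nu> C + scaleC \<mu> D + scaleC (\<mu> * \<nu>) 1"
    by (simp add: distrib_left distrib_right scaleC_mult_left[symmetric]
        scaleC_mult_right[symmetric] scaleC_scaleC scaleC_add_right mult.commute algebra_simps)
  thus ?thesis
    by (simp add: ucp_add ucp_scaleC ucp_one bounded_op_add[OF ucp_bounded]
        bounded_op_scaleC[OF ucp_bounded] scaleC_add_right scaleC_scaleC algebra_simps)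
qed

lemma ucp_defect_bounded: "bounded_op (\<lambda>x. \<Phi> (A * B) x - \<Phi> A (\<Phi> B x))"
  using bounded_op_diff_fun[OF ucp_bounded bounded_op_comp[OF ucp_bounded ucp_bounded]]
  by (simp add: o_def)

lemma ucp_defect_adjoint:
  "cinner (\<Phi> (A * B) x - \<Phi> A (\<Phi> B x)) y
   = cinner x (\<Phi> (cstar B * cstar A) y - \<Phi> (cstar B) (\<Phi> (cstar A) y))"
  using ucp_adjoint[of x "A * B" y] ucp_adjoint[of "\<Phi> B x" A y] ucp_adjoint[of x B "\<Phi> (cstar A) y"]
  by (simp add: cstar_mult cinner_diff_left cinner_diff_right)

end

theorem mainTheorem11:
  fixes \<Phi> :: "'a::unital_cstar_algebra \<Rightarrow> ('h::chilbert_space \<Rightarrow> 'h)"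
    and A B :: 'a and m1 M1 m2 M2 :: complex
  assumes "ucp_map \<Phi>"
    and "in_diam_ball m1 M1 A"
    and "in_diam_ball m2 M2 B"
  shows "op_le (op_abs (\<lambda>x. \<Phi> (A * B) x - \<Phi> A (\<Phi> B x)))
           (\<lambda>x. scaleC (complex_of_real (cmod (M1 - m1) * cmod (M2 - m2) / 4)) x)"
proof (rule op_abs_le_scalar)
  note ucp = assms(1)
  define C where "C = A - scaleC ((M1 + m1) / 2) 1"
  define D where "D = B - scaleC ((M2 + m2) / 2) 1"
  have "norm C \<le> cmod (M1 - m1) / 2" "norm D \<le> cmod (M2 - m2) / 2"
    using assms(2,3) by (simp_all add: in_diam_ball_def C_def D_def)
  hence "norm (\<Phi> (C * D) x - \<Phi> C (\<Phi> D x)) \<le> (cmod (M1 - m1) / 2) * (cmod (M2 - m2) / 2) * norm x"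
    for x by (rule ucp_defect_norm_bound[OF ucp])
  moreover have "A = C + scaleC ((M1 + m1) / 2) 1" "B = D + scaleC ((M2 + m2) / 2) 1"
    by (simp_all add: C_def D_def)
  ultimately show "norm (\<Phi> (A * B) x - \<Phi> A (\<Phi> B x)) \<le> cmod (M1 - m1) * cmod (M2 - m2) / 4 * norm x"
    for x by (simp add: ucp_defect_shift[OF ucp])
qed (use assms(1) in \<open>simp_all add: ucp_defect_bounded ucp_defect_adjoint\<close>)

end
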